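(* Let $\mathcal C$ be a class of Baire class 1 functions on compact Polish spaces which contains all functions that are differences of bounded semi-continuous functions. Let $T$ be a complete theory. Then $T$ is stable if and only if $T$ has NIP and $T$ is $\mathcal C$.
   Context: For a formula $\phi(x,y)$ and a countable sequence $(a_i:i<\omega)$, the functions $\phi(a_i,y)$ are regarded as continuous $\{0,1\}$-valued functions on the compact Polish space $S_{\tilde\phi}(\{a_i\})$ of complete $\tilde\phi$-types over $\{a_i:i<\omega\}$ ($\tilde\phi(y,x)=\phi(x,y)$), sending $q$ to $1$ iff $\phi(a_i,y)\in q$. $T$ is $\mathcal C$ means: for every formula $\phi(x,y)$ and every infinite sequence $(a_i:i<\omega)$ in the monster model, if $(\phi(a_i,y):i<\omega)$ converges pointwise to a function in $\mathcal C$, then there is no infinite sequence $(b_j:j<\omega)$ such that $\phi(a_i,b_j)$ holds iff $i<j$. A function is Baire class 1 if it is a pointwise limit of continuous functions; it is DBSC if it equals $F_1-F_2$ for bounded semi-continuous $F_1,F_2$. $T$ is stable if no formula has the order property (no $(a_i),(b_j)$ with $\phi(a_i,b_j)\iff i<j$); $T$ has NIP if no formula $\phi(x,y)$ admits $(a_i:i<\omega)$ such that for every $S\subseteq\omega$ some $b$ satisfies $\phi(a_i,b)\iff i\in S$. *)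

theory Defs
  imports "HOL-Analysis.Analysis"
begin

text \<open>Terms and formulas over function symbols of type 'f and relation symbols of
type 'r (symbols may be used with any number of arguments, i.e. each pair
(symbol, arity) counts as a separate symbol).\<close>

datatype 'f trm = Var nat | Fn 'f "'f trm list"

datatype ('f, 'r) fm =
    FF
  | Eq "'f trm" "'f trm"
  | Rl 'r "'f trm list"
  | Neg "('f, 'r) fm"
  | Conj "('f, 'r) fm" "('f, 'r) fm"
  | Ex nat "('f, 'r) fm"

text \<open>A structure with universe the whole type 'm: interpretations of the
function and relation symbols.\<close>

record ('m, 'f, 'r) struc =
  fn_int :: "'f \<Rightarrow> 'm list \<Rightarrow> 'm"
  rl_int :: "'r \<Rightarrow> 'm list \<Rightarrow> bool"

fun evalt :: "('m, 'f, 'r) struc \<Rightarrow> (nat \<Rightarrow> 'm) \<Rightarrow> 'f trm \<Rightarrow> 'm" where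
  "evalt M e (Var v) = e v"
| "evalt M e (Fn f ts) = fn_int M f (map (evalt M e) ts)"

fun fvt :: "'f trm \<Rightarrow> nat set" where
  "fvt (Var v) = {v}"
| "fvt (Fn f ts) = (\<Union>t\<in>set ts. fvt t)"

primrec sat :: "('m, 'f, 'r) struc \<Rightarrow> (nat \<Rightarrow> 'm) \<Rightarrow> ('f, 'r) fm \<Rightarrow> bool" where
  "sat M e FF = False"
| "sat M e (Eq s t) = (evalt M e s = evalt M e t)"
| "sat M e (Rl r ts) = rl_int M r (map (evalt M e) ts)"
| "sat M e (Neg \<phi>) = (\<not> sat M e \<phi>)"
| "sat M e (Conj \<phi> \<psi>) = (sat M e \<phi> \<and> sat M e \<psi>)"
| "sat M e (Ex v \<phi>) = (\<exists>m. sat M (e(v := m)) \<phi>)"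

primrec fv :: "('f, 'r) fm \<Rightarrow> nat set" where
  "fv FF = {}"
| "fv (Eq s t) = fvt s \<union> fvt t"
| "fv (Rl r ts) = (\<Union>t\<in>set ts. fvt t)"
| "fv (Neg \<phi>) = fv \<phi>"
| "fv (Conj \<phi> \<psi>) = fv \<phi> \<union> fv \<psi>"
| "fv (Ex v \<phi>) = fv \<phi> - {v}"

definition env :: "'m list \<Rightarrow> nat \<Rightarrow> 'm" where
  "env xs v = (if v < length xs then xs ! v else undefined)"

text \<open>A partitioned formula \<phi>(x,y) with x = (v_0..v_{n-1}) and y = (v_n..v_{n+k-1}).\<close>
definition pformula :: "('f, 'r) fm \<Rightarrow> nat \<Rightarrow> nat \<Rightarrow> bool" where
  "pformula \<phi> n k \<longleftrightarrow> fv \<phi> \<subseteq> {..<n + k}"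

definition holds :: "('m, 'f, 'r) struc \<Rightarrow> ('f, 'r) fm \<Rightarrow> 'm list \<Rightarrow> 'm list \<Rightarrow> bool" where
  "holds M \<phi> a b \<longleftrightarrow> sat M (env (a @ b)) \<phi>"

text \<open>A formula with parameters in k free variables is a pair (\<psi>, c) with \<psi> having
free variables among v_0..v_{k+length c - 1}; it is satisfied by the k-tuple b iff
\<psi>(b, c) holds.\<close>

definition aleph1_saturated :: "('m, 'f, 'r) struc \<Rightarrow> bool" where
  "aleph1_saturated M \<longleftrightarrow>
     (\<forall>(k::nat) (p :: (('f, 'r) fm \<times> 'm list) set).
        (\<forall>(\<psi>, c)\<in>p. fv \<psi> \<subseteq> {..<k + length c}) \<longrightarrow>
        countable (\<Union>(\<psi>, c)\<in>p. set c) \<longrightarrow>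
        (\<forall>F. finite F \<longrightarrow> F \<subseteq> p \<longrightarrow>
              (\<exists>b. length b = k \<and> (\<forall>(\<psi>, c)\<in>F. holds M \<psi> b c))) \<longrightarrow>
        (\<exists>b. length b = k \<and> (\<forall>(\<psi>, c)\<in>p. holds M \<psi> b c)))"

definition order_property :: "('m, 'f, 'r) struc \<Rightarrow> ('f, 'r) fm \<Rightarrow> nat \<Rightarrow> nat \<Rightarrow> bool" where
  "order_property M \<phi> n k \<longleftrightarrow>
     (\<exists>(a :: nat \<Rightarrow> 'm list) (b :: nat \<Rightarrow> 'm list).
        (\<forall>i. length (a i) = n) \<and> (\<forall>j. length (b j) = k) \<and>
        (\<forall>i j. holds M \<phi> (a i) (b j) \<longleftrightarrow> i < j))"

definition stable :: "('m, 'f, 'r) struc \<Rightarrow> bool" where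
  "stable M \<longleftrightarrow> (\<forall>\<phi> n k. pformula \<phi> n k \<longrightarrow> \<not> order_property M \<phi> n k)"

definition NIP :: "('m, 'f, 'r) struc \<Rightarrow> bool" where
  "NIP M \<longleftrightarrow> (\<forall>\<phi> n k. pformula \<phi> n k \<longrightarrow>
     \<not> (\<exists>a :: nat \<Rightarrow> 'm list. (\<forall>i. length (a i) = n) \<and>
          (\<forall>S :: nat set. \<exists>b. length b = k \<and> (\<forall>i. holds M \<phi> (a i) b \<longleftrightarrow> i \<in> S))))"

definition cantor :: "(nat \<Rightarrow> bool) topology" where
  "cantor = product_topology (\<lambda>_. discrete_topology UNIV) UNIV"

text \<open>The space S_{\<phi>~}({a_i}) of complete \<phi>~-types over {a_i : i < omega}: a complete
\<phi>~-type q is represented by the function i \<mapsto> [\<phi>(a_i,y) \<in> q]; it is consistent iff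
each finite part is realized (in the aleph_1-saturated monster). Topologised as a
subspace of Cantor space (this is the Stone topology).\<close>
definition type_space :: "('m, 'f, 'r) struc \<Rightarrow> ('f, 'r) fm \<Rightarrow> nat \<Rightarrow> (nat \<Rightarrow> 'm list) \<Rightarrow> (nat \<Rightarrow> bool) set" where
  "type_space M \<phi> k a =
     {q. \<forall>N. \<exists>b. length b = k \<and> (\<forall>i<N. holds M \<phi> (a i) b \<longleftrightarrow> q i)}"

definition type_space_top :: "('m, 'f, 'r) struc \<Rightarrow> ('f, 'r) fm \<Rightarrow> nat \<Rightarrow> (nat \<Rightarrow> 'm list) \<Rightarrow> (nat \<Rightarrow> bool) topology" where
  "type_space_top M \<phi> k a = subtopology cantor (type_space M \<phi> k a)"

definition compact_Polish :: "'a topology \<Rightarrow> bool" where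
  "compact_Polish X \<longleftrightarrow> compact_space X \<and> completely_metrizable_space X \<and> separable_space X"

definition Baire1 :: "'a topology \<Rightarrow> ('a \<Rightarrow> real) \<Rightarrow> bool" where
  "Baire1 X f \<longleftrightarrow> (\<exists>fs :: nat \<Rightarrow> 'a \<Rightarrow> real. (\<forall>n. continuous_map X euclideanreal (fs n)) \<and>
       (\<forall>x\<in>topspace X. (\<lambda>n. fs n x) \<longlonglongrightarrow> f x))"

definition lower_semicont :: "'a topology \<Rightarrow> ('a \<Rightarrow> real) \<Rightarrow> bool" where
  "lower_semicont X f \<longleftrightarrow> (\<forall>t. openin X {x\<in>topspace X. t < f x})"

definition upper_semicont :: "'a topology \<Rightarrow> ('a \<Rightarrow> real) \<Rightarrow> bool" where
  "upper_semicont X f \<longleftrightarrow> (\<forall>t. openin X {x\<in>topspace X. f x < t})"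

definition bounded_semicont :: "'a topology \<Rightarrow> ('a \<Rightarrow> real) \<Rightarrow> bool" where
  "bounded_semicont X f \<longleftrightarrow> (lower_semicont X f \<or> upper_semicont X f) \<and>
      (\<exists>B. \<forall>x\<in>topspace X. \<bar>f x\<bar> \<le> B)"

definition DBSC :: "'a topology \<Rightarrow> ('a \<Rightarrow> real) \<Rightarrow> bool" where
  "DBSC X f \<longleftrightarrow> (\<exists>F1 F2. bounded_semicont X F1 \<and> bounded_semicont X F2 \<and>
      (\<forall>x\<in>topspace X. f x = F1 x - F2 x))"

definition is_class :: "((nat \<Rightarrow> bool) topology \<Rightarrow> ((nat \<Rightarrow> bool) \<Rightarrow> real) \<Rightarrow> bool) \<Rightarrow> ('m, 'f, 'r) struc \<Rightarrow> bool" where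
  "is_class \<C> M \<longleftrightarrow> (\<forall>\<phi> n k (a :: nat \<Rightarrow> 'm list). pformula \<phi> n k \<longrightarrow> (\<forall>i. length (a i) = n) \<longrightarrow>
      (\<exists>g. (\<forall>q\<in>type_space M \<phi> k a. (\<lambda>i. if q i then 1 else 0) \<longlonglongrightarrow> g q) \<and>
           \<C> (type_space_top M \<phi> k a) g) \<longrightarrow>
      \<not> (\<exists>b :: nat \<Rightarrow> 'm list. (\<forall>j. length (b j) = k) \<and>
            (\<forall>i j. holds M \<phi> (a i) (b j) \<longleftrightarrow> i < j)))"

end

theory Submission
  imports Defs "HOL-Library.Ramsey"
begin

(* Stability gives NIP and the C property at once, since both only forbid instances of the
   order property. Conversely, suppose phi(a_i, b_j) holds iff i < j. Call a finite set X of
   indices alternating if some b satisfies phi(a_j, b) exactly for the j in X of even rank in X.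
   Under NIP there are L > 0 and an infinite I without alternating L-subsets: otherwise Ramsey's
   theorem gives, for every L, a subsequence all of whose subsets below L alternate,
   aleph_1-saturation glues these, one element at a time, into one infinite sequence all of
   whose finite subsets alternate, and phi shatters its odd-indexed elements. Along I every type
   q changes its truth value fewer than L times, so phi(a_i, y) converges on the type space to
   the parity of the longest alternation h(q) of q, which is ceil(h/2) - floor(h/2), a difference
   of bounded lower semicontinuous functions. This limit therefore lies in C, and the order
   property along I contradicts T being C. *)

section \<open>Renaming, conjunction lists and variable blocks\<close>

fun rename_trm :: "(nat \<Rightarrow> nat) \<Rightarrow> 'f trm \<Rightarrow> 'f trm" where
  "rename_trm f (Var v) = Var (f v)"
| "rename_trm f (Fn g ts) = Fn g (map (rename_trm f) ts)"

primrec rename_fm :: "(nat \<Rightarrow> nat) \<Rightarrow> ('f, 'r) fm \<Rightarrow> ('f, 'r) fm" where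
  "rename_fm f FF = FF"
| "rename_fm f (Eq s t) = Eq (rename_trm f s) (rename_trm f t)"
| "rename_fm f (Rl r ts) = Rl r (map (rename_trm f) ts)"
| "rename_fm f (Neg \<phi>) = Neg (rename_fm f \<phi>)"
| "rename_fm f (Conj \<phi> \<psi>) = Conj (rename_fm f \<phi>) (rename_fm f \<psi>)"
| "rename_fm f (Ex v \<phi>) = Ex (f v) (rename_fm f \<phi>)"

lemma evalt_rename_trm: "evalt M e (rename_trm f t) = evalt M (e \<circ> f) t"
  by (induction t) (auto cong: map_cong)

lemma fvt_rename_trm: "fvt (rename_trm f t) = f ` fvt t"
  by (induction t) auto

lemma sat_rename_fm: "inj f \<Longrightarrow> sat M e (rename_fm f \<phi>) \<longleftrightarrow> sat M (e \<circ> f) \<phi>"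
proof (induction \<phi> arbitrary: e)
  case (Ex v \<phi>)
  have upd: "(e(f v := m)) \<circ> f = (e \<circ> f)(v := m)" for m
    using Ex.prems by (auto simp: fun_eq_iff inj_eq)
  have "sat M e (rename_fm f (Ex v \<phi>)) \<longleftrightarrow> (\<exists>m. sat M (e(f v := m)) (rename_fm f \<phi>))"
    by simp
  also have "\<dots> \<longleftrightarrow> (\<exists>m. sat M ((e \<circ> f)(v := m)) \<phi>)"
    using Ex by (simp only: upd)
  finally show ?case
    by (simp only: sat.simps)
qed (auto simp: evalt_rename_trm comp_def)

lemma fv_rename_fm: "inj f \<Longrightarrow> fv (rename_fm f \<phi>) = f ` fv \<phi>"
  by (induction \<phi>) (auto simp: fvt_rename_trm inj_eq)

lemma evalt_cong: "\<forall>v\<in>fvt t. e v = e' v \<Longrightarrow> evalt M e t = evalt M e' t"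
  by (induction t) (auto cong: map_cong)

lemma sat_cong: "\<forall>v\<in>fv \<phi>. e v = e' v \<Longrightarrow> sat M e \<phi> \<longleftrightarrow> sat M e' \<phi>"
proof (induction \<phi> arbitrary: e e')
  case (Eq s t)
  then show ?case
    using evalt_cong[of s e e' M] evalt_cong[of t e e' M] by simp
next
  case (Rl r ts)
  then have "\<forall>t\<in>set ts. \<forall>v\<in>fvt t. e v = e' v"
    by auto
  then have "\<forall>t\<in>set ts. evalt M e t = evalt M e' t"
    using evalt_cong by blast
  then show ?case
    by (simp cong: map_cong)
next
  case (Conj \<phi>1 \<phi>2)
  then show ?case
    by (metis Un_iff fv.simps(5) sat.simps(5))
next
  case (Ex v \<phi>)
  then have "sat M (e(v := m)) \<phi> \<longleftrightarrow> sat M (e'(v := m)) \<phi>" for m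
    by simp
  then show ?case
    by simp
qed simp_all

primrec Conjs :: "('f, 'r) fm list \<Rightarrow> ('f, 'r) fm" where
  "Conjs [] = Neg FF"
| "Conjs (\<psi> # \<psi>s) = Conj \<psi> (Conjs \<psi>s)"

lemma sat_Conjs: "sat M e (Conjs \<psi>s) \<longleftrightarrow> (\<forall>\<psi>\<in>set \<psi>s. sat M e \<psi>)"
  by (induction \<psi>s) auto

lemma fv_Conjs: "fv (Conjs \<psi>s) = (\<Union>\<psi>\<in>set \<psi>s. fv \<psi>)"
  by (induction \<psi>s) auto

lemma set_map_subseqs_upt: "set (map (f \<circ> set) (subseqs [0..<L])) = f ` Pow {..<L}"
  unfolding set_map image_comp[symmetric] subseqs_powset by (simp add: atLeast0LessThan)

primrec Exs :: "nat list \<Rightarrow> ('f, 'r) fm \<Rightarrow> ('f, 'r) fm" where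
  "Exs [] \<psi> = \<psi>"
| "Exs (v # vs) \<psi> = Ex v (Exs vs \<psi>)"

lemma sat_Exs:
  "sat M e (Exs vs \<psi>) \<longleftrightarrow> (\<exists>e'. (\<forall>v. v \<notin> set vs \<longrightarrow> e' v = e v) \<and> sat M e' \<psi>)"
proof (induction vs arbitrary: e)
  case (Cons v vs)
  show ?case
  proof
    assume "sat M e (Exs (v # vs) \<psi>)"
    then obtain m where "sat M (e(v := m)) (Exs vs \<psi>)"
      by auto
    then obtain e' where "\<forall>w. w \<notin> set vs \<longrightarrow> e' w = (e(v := m)) w" "sat M e' \<psi>"
      using Cons by blast
    then show "\<exists>e'. (\<forall>w. w \<notin> set (v # vs) \<longrightarrow> e' w = e w) \<and> sat M e' \<psi>"
      by (intro exI[of _ e']) auto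
  next
    assume "\<exists>e'. (\<forall>w. w \<notin> set (v # vs) \<longrightarrow> e' w = e w) \<and> sat M e' \<psi>"
    then obtain e' where "\<forall>w. w \<notin> set (v # vs) \<longrightarrow> e' w = e w" "sat M e' \<psi>"
      by blast
    then have "sat M (e(v := e' v)) (Exs vs \<psi>)"
      using Cons by (metis fun_upd_other fun_upd_same set_ConsD)
    then show "sat M e (Exs (v # vs) \<psi>)"
      by auto
  qed
qed (simp add: fun_eq_iff[symmetric])

lemma fv_Exs: "fv (Exs vs \<psi>) = fv \<psi> - set vs"
  by (induction vs) auto

definition literal :: "bool \<Rightarrow> ('f, 'r) fm \<Rightarrow> ('f, 'r) fm" where
  "literal B \<psi> = (if B then \<psi> else Neg \<psi>)"

lemma sat_literal: "sat M e (literal B \<psi>) \<longleftrightarrow> (sat M e \<psi> \<longleftrightarrow> B)"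
  by (auto simp: literal_def)

lemma fv_literal: "fv (literal B \<psi>) = fv \<psi>"
  by (auto simp: literal_def)

lemma holds_literal: "holds M (literal B \<psi>) a b \<longleftrightarrow> (holds M \<psi> a b \<longleftrightarrow> B)"
  by (simp add: holds_def sat_literal)

definition block :: "(nat \<Rightarrow> 'm) \<Rightarrow> nat \<Rightarrow> nat \<Rightarrow> 'm list" where
  "block e p len = map (\<lambda>v. e (p + v)) [0..<len]"

lemma length_block [simp]: "length (block e p len) = len"
  by (simp add: block_def)

lemma block_cong: "(\<And>v. v < len \<Longrightarrow> e (p + v) = e' (p + v)) \<Longrightarrow> block e p len = block e' p len"
  by (simp add: block_def)

lemma block_env_append:
  assumes "length b = k" "length c = n"
  shows "block (env (b @ c)) 0 k = b" and "block (env (b @ c)) k n = c"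
  using assms by (auto simp: block_def env_def nth_append intro: nth_equalityI)

section \<open>Cantor space\<close>

lemma cantor_eq_euclidean: "cantor = euclidean"
proof -
  have "discrete_topology (UNIV::bool set) = euclidean"
    by (simp add: topology_eq open_discrete)
  then show ?thesis
    by (simp add: cantor_def euclidean_product_topology)
qed

lemma open_finitely_determined:
  fixes A :: "(nat \<Rightarrow> bool) set"
  assumes "finite J" and support: "\<And>q q'. q \<in> A \<Longrightarrow> (\<forall>i\<in>J. q' i = q i) \<Longrightarrow> q' \<in> A"
  shows "open A"
proof -
  \<comment> \<open>The detour through id matches the shape of product_topology_basis'.\<close>
  have "A = (\<Union>q\<in>A. {q'. \<forall>i\<in>J. q' (id i) \<in> {q i}})"
    using support by auto
  also have "open \<dots>"
    by (intro open_UN ballI product_topology_basis' \<open>finite J\<close> open_discrete)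
  finally show ?thesis .
qed

lemma closed_finitely_determined:
  fixes A :: "(nat \<Rightarrow> bool) set"
  assumes "finite J" and "\<And>q q'. q \<in> A \<Longrightarrow> (\<forall>i\<in>J. q' i = q i) \<Longrightarrow> q' \<in> A"
  shows "closed A"
  unfolding closed_def
proof (rule open_finitely_determined[OF \<open>finite J\<close>])
  fix q q' assume "q \<in> - A" "\<forall>i\<in>J. q' i = q i"
  then show "q' \<in> - A"
    using assms(2)[of q' q] by auto
qed

lemma open_cylinder_subset:
  fixes x :: "nat \<Rightarrow> bool"
  assumes "open U" "x \<in> U"
  obtains N where "{q. \<forall>i<N. q i = x i} \<subseteq> U"
proof -
  have "openin (product_topology (\<lambda>_. euclidean) UNIV) U"
    using assms(1) unfolding open_fun_def .
  then obtain X where X: "x \<in> (\<Pi>\<^sub>E i\<in>UNIV. X i)" "finite {i. X i \<noteq> topspace euclidean}"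
      "(\<Pi>\<^sub>E i\<in>UNIV. X i) \<subseteq> U"
    using product_topology_open_contains_basis[OF _ assms(2)] by blast
  obtain N where N: "{i. X i \<noteq> UNIV} \<subseteq> {..<N}"
    using finite_nat_bounded[of "{i. X i \<noteq> UNIV}"] X(2) by auto
  have X_UNIV: "X i = UNIV" if "\<not> i < N" for i
    using N that by blast
  have "{q. \<forall>i<N. q i = x i} \<subseteq> (\<Pi>\<^sub>E i\<in>UNIV. X i)"
  proof
    fix q assume "q \<in> {q. \<forall>i<N. q i = x i}"
    then have "q i \<in> X i" for i
      using X(1) X_UNIV by (cases "i < N") auto
    then show "q \<in> (\<Pi>\<^sub>E i\<in>UNIV. X i)"
      by (simp add: PiE_UNIV_domain)
  qed
  then show thesis
    using X(3) by (intro that) (rule subset_trans)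
qed

lemma second_countable_cantor: "second_countable cantor"
  unfolding second_countable_def cantor_eq_euclidean
proof (intro exI conjI allI impI ballI)
  let ?B = "range (\<lambda>(N, bs). {q :: nat \<Rightarrow> bool. \<forall>i<N. q i = bs ! i})"
  show "countable ?B"
    by simp
  show "openin euclidean V" if "V \<in> ?B" for V
  proof -
    obtain N bs where "V = {q. \<forall>i<N. q i = bs ! i}"
      using \<open>V \<in> ?B\<close> by auto
    moreover have "open {q :: nat \<Rightarrow> bool. \<forall>i<N. q i = bs ! i}"
      by (rule open_finitely_determined[of "{..<N}"]) auto
    ultimately have "open V"
      by simp
    then show ?thesis
      by simp
  qed
  show "\<exists>V\<in>?B. x \<in> V \<and> V \<subseteq> U" if "openin euclidean U \<and> x \<in> U" for U x
  proof -
    have "open U" "x \<in> U"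
      using that by simp_all
    then obtain N where "{q. \<forall>i<N. q i = x i} \<subseteq> U"
      by (rule open_cylinder_subset)
    moreover have "{q. \<forall>i<N. q i = x i} \<in> ?B"
      by (rule range_eqI[of _ _ "(N, map x [0..<N])"]) simp
    moreover have "x \<in> {q. \<forall>i<N. q i = x i}"
      by simp
    ultimately show ?thesis
      by (intro bexI[of _ "{q. \<forall>i<N. q i = x i}"] conjI)
  qed
qed

lemma compact_space_cantor: "compact_space cantor"
  unfolding cantor_def
  by (simp add: compact_space_product_topology compact_space_discrete_topology)

lemma completely_metrizable_space_cantor: "completely_metrizable_space cantor"
  unfolding cantor_def
  by (simp add: completely_metrizable_space_product_topology
      completely_metrizable_space_discrete_topology)

lemma compact_Polish_closed_subspace:
  assumes "closedin cantor Q"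
  shows "compact_Polish (subtopology cantor Q)"
  unfolding compact_Polish_def
proof (intro conjI)
  show "compact_space (subtopology cantor Q)"
    by (rule compact_space_subtopology[OF closedin_compact_space[OF compact_space_cantor assms]])
  show "completely_metrizable_space (subtopology cantor Q)"
    by (rule completely_metrizable_space_closedin[OF completely_metrizable_space_cantor assms])
  show "separable_space (subtopology cantor Q)"
    by (intro second_countable_imp_separable_space second_countable_subtopology
        second_countable_cantor)
qed

section \<open>Alternation of 0-1 sequences\<close>

definition alternates :: "(nat \<Rightarrow> bool) \<Rightarrow> nat set \<Rightarrow> bool" where
  "alternates q X \<longleftrightarrow> (\<forall>j\<in>X. q j \<longleftrightarrow> even (card {i\<in>X. i < j}))"

lemma alternates_empty [simp]: "alternates q {}"
  by (simp add: alternates_def)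

lemma open_alternates: "finite X \<Longrightarrow> open {q. alternates q X}"
  by (rule open_finitely_determined[of X]) (auto simp: alternates_def)

lemma alternates_insert_above:
  assumes "alternates q X" "finite X" "\<forall>j\<in>X. j < i" "q i \<longleftrightarrow> even (card X)"
  shows "alternates q (insert i X)"
  unfolding alternates_def
proof
  fix j assume "j \<in> insert i X"
  then consider "j = i" | "j \<in> X" "j < i"
    using assms(3) by auto
  then show "q j \<longleftrightarrow> even (card {i' \<in> insert i X. i' < j})"
  proof cases
    case 1
    then have "{i' \<in> insert i X. i' < j} = X"
      using assms(3) by auto
    then show ?thesis
      using 1 assms(4) by simp
  next
    case 2
    then have "{i' \<in> insert i X. i' < j} = {i' \<in> X. i' < j}"
      by auto
    then show ?thesis
      using 2 assms(1) by (simp add: alternates_def)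
  qed
qed

lemma alternates_initial_segment:
  assumes "alternates q (X \<union> Z)" "\<forall>z\<in>Z. \<forall>x\<in>X. x < z"
  shows "alternates q X"
proof -
  have "{i \<in> X \<union> Z. i < j} = {i \<in> X. i < j}" if "j \<in> X" for j
    using assms(2) that by force
  then show ?thesis
    using assms(1) by (simp add: alternates_def)
qed

lemma alternates_comp_strict_mono:
  assumes "strict_mono e"
  shows "alternates (q \<circ> e) X \<longleftrightarrow> alternates q (e ` X)"
proof -
  have "card {i \<in> e ` X. i < e j} = card {i \<in> X. i < j}" for j
  proof -
    have "{i \<in> e ` X. i < e j} = e ` {i \<in> X. i < j}"
      using assms by (auto simp: strict_mono_less)
    then show ?thesis
      using strict_mono_imp_inj_on[OF assms] by (simp add: card_image inj_on_subset)
  qed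
  then show ?thesis
    by (simp add: alternates_def)
qed

definition max_alternation :: "nat \<Rightarrow> (nat \<Rightarrow> bool) \<Rightarrow> nat" where
  "max_alternation L q = (GREATEST c. c < L \<and> (\<exists>X. finite X \<and> card X = c \<and> alternates q X))"

context
  fixes L :: nat
  assumes L_pos: "0 < L"
begin

lemma max_alternation:
  shows max_alternation_less: "max_alternation L q < L"
    and max_alternation_witness: "\<exists>X. finite X \<and> card X = max_alternation L q \<and> alternates q X"
    and max_alternation_ge: "finite X \<Longrightarrow> card X < L \<Longrightarrow> alternates q X \<Longrightarrow> card X \<le> max_alternation L q"
proof -
  let ?P = "\<lambda>c. c < L \<and> (\<exists>X. finite X \<and> card X = c \<and> alternates q X)"
  have "?P 0"
    using L_pos by (auto intro: exI[of _ "{}"])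
  then have "?P (max_alternation L q)"
    unfolding max_alternation_def by (rule GreatestI_nat[where b = L]) auto
  then show "max_alternation L q < L" "\<exists>X. finite X \<and> card X = max_alternation L q \<and> alternates q X"
    by auto
  show "card X \<le> max_alternation L q" if "finite X" "card X < L" "alternates q X"
    unfolding max_alternation_def by (rule Greatest_le_nat[where b = L]) (use that in auto)
qed

lemma tendsto_parity_max_alternation:
  assumes no_long: "\<And>X. finite X \<Longrightarrow> card X = L \<Longrightarrow> \<not> alternates q X"
  shows "(\<lambda>i. if q i then 1 else 0) \<longlonglongrightarrow> (if odd (max_alternation L q) then 1 else (0::real))"
proof -
  obtain X where X: "finite X" "card X = max_alternation L q" "alternates q X"
    using max_alternation_witness by blast
  obtain N where N: "\<forall>j\<in>X. j < N"
    using X(1) finite_nat_bounded by (meson lessThan_iff subsetD)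
  have "q i \<longleftrightarrow> odd (max_alternation L q)" if "i \<ge> N" for i
  proof (rule ccontr)
    assume "\<not> (q i \<longleftrightarrow> odd (max_alternation L q))"
    then have alt: "alternates q (insert i X)"
      using X N that by (intro alternates_insert_above) auto
    have "i \<notin> X"
      using N that by auto
    then have card: "card (insert i X) = max_alternation L q + 1"
      using X(1,2) by simp
    show False
    proof (cases "max_alternation L q + 1 < L")
      case True
      then show False
        using max_alternation_ge[OF _ _ alt] X(1) card by simp
    next
      case False
      then show False
        using no_long[of "insert i X"] alt X(1) card max_alternation_less[of q] by simp
    qed
  qed
  then show ?thesis
    by (intro tendsto_eventually) (auto simp: eventually_sequentially)
qed

lemma lower_semicont_max_alternation:
  assumes "mono r"
  shows "lower_semicont (subtopology cantor Q) (\<lambda>q. real (r (max_alternation L q)))"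
  unfolding lower_semicont_def
proof
  fix t
  define U where
    "U = (\<Union>X\<in>{X. finite X \<and> card X < L \<and> t < real (r (card X))}. {q. alternates q X})"
  have "open U"
    unfolding U_def by (auto intro!: open_alternates)
  moreover have "t < real (r (max_alternation L q)) \<longleftrightarrow> q \<in> U" for q
  proof
    assume "t < real (r (max_alternation L q))"
    then show "q \<in> U"
      unfolding U_def using max_alternation_witness[of q] max_alternation_less[of q] by auto
  next
    assume "q \<in> U"
    then obtain X where X: "finite X" "card X < L" "t < real (r (card X))" "alternates q X"
      unfolding U_def by auto
    then have "r (card X) \<le> r (max_alternation L q)"
      using max_alternation_ge assms by (simp add: monoD)
    then show "t < real (r (max_alternation L q))"
      using X(3) by linarith
  qed
  ultimately show "openin (subtopology cantor Q)
      {q \<in> topspace (subtopology cantor Q). t < real (r (max_alternation L q))}"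
    by (auto simp: openin_subtopology cantor_eq_euclidean open_openin[symmetric]
        intro!: exI[of _ U])
qed

lemma DBSC_parity_max_alternation:
  "DBSC (subtopology cantor Q) (\<lambda>q. if odd (max_alternation L q) then 1 else 0)"
proof -
  define F1 where "F1 q = real ((max_alternation L q + 1) div 2)" for q
  define F2 where "F2 q = real (max_alternation L q div 2)" for q
  have "lower_semicont (subtopology cantor Q) F1" "lower_semicont (subtopology cantor Q) F2"
    unfolding F1_def F2_def
    by (auto intro!: lower_semicont_max_alternation monoI div_le_mono)
  moreover have "\<bar>F1 q\<bar> \<le> real L" "\<bar>F2 q\<bar> \<le> real L" for q
    using max_alternation_less[of q] by (auto simp: F1_def F2_def)
  moreover have "(if odd (max_alternation L q) then 1 else 0) = F1 q - F2 q" for q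
    by (cases "odd (max_alternation L q)") (auto simp: F1_def F2_def elim!: oddE evenE)
  ultimately show ?thesis
    unfolding DBSC_def bounded_semicont_def by blast
qed

end

lemma bounded_alternation_DBSC_limit:
  assumes "0 < L" and no_long: "\<And>q X. q \<in> Q \<Longrightarrow> finite X \<Longrightarrow> card X = L \<Longrightarrow> \<not> alternates q X"
  shows "\<exists>g. (\<forall>q\<in>Q. (\<lambda>i. if q i then 1 else 0) \<longlonglongrightarrow> g q) \<and> DBSC (subtopology cantor Q) g"
proof (intro exI conjI ballI)
  fix q assume "q \<in> Q"
  show "(\<lambda>i. if q i then 1 else 0) \<longlonglongrightarrow> (if odd (max_alternation L q) then 1 else (0::real))"
    by (rule tendsto_parity_max_alternation[OF \<open>0 < L\<close> no_long[OF \<open>q \<in> Q\<close>]])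
qed (rule DBSC_parity_max_alternation[OF \<open>0 < L\<close>])

section \<open>Saturation, Ramsey's theorem and type spaces\<close>

lemma aleph1_saturated_realizes:
  assumes "aleph1_saturated M"
    and fv: "\<And>i::nat. fv (\<psi> i) \<subseteq> {..<k + length (c i)}"
    and fin: "\<And>N. \<exists>b. length b = k \<and> (\<forall>i<N. holds M (\<psi> i) b (c i))"
  shows "\<exists>b. length b = k \<and> (\<forall>i. holds M (\<psi> i) b (c i))"
proof -
  define p where "p = range (\<lambda>i. (\<psi> i, c i))"
  have "\<forall>(\<psi>', c')\<in>p. fv \<psi>' \<subseteq> {..<k + length c'}"
    using fv by (auto simp: p_def)
  moreover have "(\<Union>(\<psi>', c')\<in>p. set c') = (\<Union>i. set (c i))"
    by (auto simp: p_def)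
  then have "countable (\<Union>(\<psi>', c')\<in>p. set c')"
    using countable_UN[of UNIV "\<lambda>i. set (c i)"] by (simp add: countable_finite)
  moreover have "\<exists>b. length b = k \<and> (\<forall>(\<psi>', c')\<in>F. holds M \<psi>' b c')"
    if F: "finite F" "F \<subseteq> p" for F
  proof -
    have "F \<subseteq> (\<lambda>i. (\<psi> i, c i)) ` UNIV"
      using F(2) by (simp add: p_def)
    then obtain G where G: "finite G" "F = (\<lambda>i. (\<psi> i, c i)) ` G"
      using finite_subset_image[OF F(1)] by blast
    obtain N where "\<forall>i\<in>G. i < N"
      using G(1) finite_nat_bounded by (meson lessThan_iff subsetD)
    then show ?thesis
      using fin[of N] G(2) by auto
  qed
  ultimately have "\<exists>b. length b = k \<and> (\<forall>(\<psi>', c')\<in>p. holds M \<psi>' b c')"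
    using assms(1) unfolding aleph1_saturated_def by blast
  then show ?thesis
    by (auto simp: p_def)
qed

lemma Ramsey_dichotomy:
  assumes "infinite Z"
  obtains Y where "Y \<subseteq> Z" "infinite Y"
    "(\<forall>X. X \<subseteq> Y \<and> finite X \<and> card X = r \<longrightarrow> P X) \<or> (\<forall>X. X \<subseteq> Y \<and> finite X \<and> card X = r \<longrightarrow> \<not> P X)"
proof -
  obtain Y and t :: nat where "Y \<subseteq> Z" "infinite Y" "t < 2"
      "\<forall>X. X \<subseteq> Y \<and> finite X \<and> card X = r \<longrightarrow> (if P X then 1 else 0) = t"
    using Ramsey[OF assms, of r "\<lambda>X. if P X then 1 else 0" 2] by force
  then show thesis
    by (intro that[of Y]) (auto split: if_splits)
qed

text \<open>Put 2 i into the set exactly when the parity has to flip before 2 i + 1.\<close>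

lemma odd_positions_pattern:
  fixes N :: nat
  shows "\<exists>X \<subseteq> {..<2*N}. \<forall>i<N. 2*i+1 \<in> X \<and> (even (card {j\<in>X. j < 2*i+1}) \<longleftrightarrow> i \<in> S)"
proof (induction N)
  case (Suc N)
  then obtain X where X: "X \<subseteq> {..<2*N}"
      "\<forall>i<N. 2*i+1 \<in> X \<and> (even (card {j\<in>X. j < 2*i+1}) \<longleftrightarrow> i \<in> S)"
    by blast
  have "finite X" "2*N \<notin> X"
    using X(1) finite_subset by auto
  define X' where
    "X' = (if even (card X) \<longleftrightarrow> N \<in> S then insert (2*N+1) X else insert (2*N+1) (insert (2*N) X))"
  have "X' \<subseteq> {..<2 * Suc N}"
    using X(1) by (auto simp: X'_def)
  moreover have "{j\<in>X'. j < 2*i+1} = {j\<in>X. j < 2*i+1}" if "i < N" for i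
    using that by (auto simp: X'_def)
  moreover have "{j\<in>X'. j < 2*N+1} = (if even (card X) \<longleftrightarrow> N \<in> S then X else insert (2*N) X)"
    using X(1) by (auto simp: X'_def)
  ultimately show ?case
    using X(2) \<open>finite X\<close> \<open>2*N \<notin> X\<close>
    by (intro exI[of _ X']) (auto simp: less_Suc_eq X'_def)
qed simp

lemma length_concat_uniform:
  "\<forall>i<l. length (a i) = n \<Longrightarrow> length (concat (map a [0..<l])) = l * n"
  by (induction l) auto

lemma nth_concat_uniform:
  assumes "\<forall>i<l. length (a i) = n" "t < l" "w < n"
  shows "concat (map a [0..<l]) ! (t * n + w) = a t ! w"
  using assms
proof (induction l)
  case (Suc l)
  have len: "length (concat (map a [0..<l])) = l * n"
    using Suc.prems(1) by (simp add: length_concat_uniform)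
  show ?case
  proof (cases "t < l")
    case True
    have "t * n + w < (t + 1) * n"
      using Suc.prems(3) by simp
    also have "\<dots> \<le> l * n"
      using True by (intro mult_le_mono1) simp
    finally show ?thesis
      using Suc True len by (simp add: nth_append)
  next
    case False
    then have "t = l"
      using Suc.prems(2) by simp
    then show ?thesis
      using len by (simp add: nth_append)
  qed
qed simp

lemma closedin_type_space: "closedin cantor (type_space M \<phi> k a)"
proof -
  have "type_space M \<phi> k a = (\<Inter>N. {q. \<exists>b. length b = k \<and> (\<forall>i<N. holds M \<phi> (a i) b \<longleftrightarrow> q i)})"
    by (auto simp: type_space_def)
  also have "closed \<dots>"
    by (intro closed_INT ballI closed_finitely_determined[of "{..<N}" for N]) auto
  finally show ?thesis
    by (simp add: cantor_eq_euclidean)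
qed

section \<open>Alternating sets of a partitioned formula\<close>

locale partitioned_formula =
  fixes M :: "('m, 'f, 'r) struc" and \<phi> :: "('f, 'r) fm" and n k :: nat
  assumes pformula: "pformula \<phi> n k"
begin

text \<open>Variables outside the x- and y-blocks of \<phi> are sent above both target blocks, which
  keeps the renaming injective.\<close>

definition relocate :: "nat \<Rightarrow> nat \<Rightarrow> nat \<Rightarrow> nat" where
  "relocate p c v = (if v < n then p + v else if v < n + k then c + (v - n) else v + p + c + n + k)"

definition phi_at :: "nat \<Rightarrow> nat \<Rightarrow> ('f, 'r) fm" where
  "phi_at p c = rename_fm (relocate p c) \<phi>"

lemma inj_relocate: "p + n \<le> c \<or> c + k \<le> p \<Longrightarrow> inj (relocate p c)"
  unfolding inj_def relocate_def by (auto split: if_splits)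

lemma sat_phi_at:
  assumes "p + n \<le> c \<or> c + k \<le> p"
  shows "sat M e (phi_at p c) \<longleftrightarrow> holds M \<phi> (block e p n) (block e c k)"
proof -
  have "sat M e (phi_at p c) \<longleftrightarrow> sat M (e \<circ> relocate p c) \<phi>"
    unfolding phi_at_def by (rule sat_rename_fm[OF inj_relocate[OF assms]])
  also have "\<dots> \<longleftrightarrow> sat M (env (block e p n @ block e c k)) \<phi>"
    using pformula
    by (intro sat_cong) (auto simp: pformula_def env_def relocate_def nth_append block_def)
  finally show ?thesis
    by (simp add: holds_def)
qed

lemma fv_phi_at:
  assumes "p + n \<le> c \<or> c + k \<le> p"
  shows "fv (phi_at p c) \<subseteq> {p..<p + n} \<union> {c..<c + k}"
  using pformula unfolding phi_at_def fv_rename_fm[OF inj_relocate[OF assms]]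
  by (auto simp: pformula_def relocate_def)

lemma holds_phi_at_swap:
  assumes "length b = k" "length c = n"
  shows "holds M (phi_at k 0) b c \<longleftrightarrow> holds M \<phi> c b"
  using assms by (simp add: holds_def sat_phi_at block_env_append)

definition alternating :: "(nat \<Rightarrow> 'm list) \<Rightarrow> nat set \<Rightarrow> bool" where
  "alternating a X \<longleftrightarrow> (\<exists>b. length b = k \<and> alternates (\<lambda>j. holds M \<phi> (a j) b) X)"

definition alternating_upto :: "(nat \<Rightarrow> 'm list) \<Rightarrow> nat \<Rightarrow> bool" where
  "alternating_upto a L \<longleftrightarrow> (\<forall>X \<subseteq> {..<L}. alternating a X)"

lemma alternating_empty: "alternating a {}"
  unfolding alternating_def by (intro exI[of _ "replicate k undefined"]) simp

lemma alternating_cong: "(\<And>i. i \<in> X \<Longrightarrow> a i = a' i) \<Longrightarrow> alternating a X \<longleftrightarrow> alternating a' X"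
  by (simp add: alternating_def alternates_def)

lemma alternating_upto_cong:
  "(\<And>i. i < L \<Longrightarrow> a i = a' i) \<Longrightarrow> alternating_upto a L \<longleftrightarrow> alternating_upto a' L"
  unfolding alternating_upto_def by (meson alternating_cong lessThan_iff subsetD)

lemma alternating_upto_mono: "alternating_upto a L \<Longrightarrow> L' \<le> L \<Longrightarrow> alternating_upto a L'"
  unfolding alternating_upto_def by (meson lessThan_subset_iff order_trans)

lemma alternating_initial_segment:
  "alternating a (X \<union> Z) \<Longrightarrow> \<forall>z\<in>Z. \<forall>x\<in>X. x < z \<Longrightarrow> alternating a X"
  unfolding alternating_def using alternates_initial_segment by blast

lemma alternating_comp_strict_mono:
  assumes "strict_mono e"
  shows "alternating (a \<circ> e) X \<longleftrightarrow> alternating a (e ` X)"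
proof -
  have "alternates (\<lambda>j. holds M \<phi> ((a \<circ> e) j) b) X \<longleftrightarrow>
      alternates (\<lambda>j. holds M \<phi> (a j) b) (e ` X)" for b
    using alternates_comp_strict_mono[OF assms, of "\<lambda>j. holds M \<phi> (a j) b" X]
    by (simp add: comp_def)
  then show ?thesis
    by (simp add: alternating_def)
qed

definition alternation_fm :: "(nat \<Rightarrow> nat) \<Rightarrow> nat \<Rightarrow> nat set \<Rightarrow> ('f, 'r) fm" where
  "alternation_fm p c X = Exs [c..<c + k]
     (Conjs (map (\<lambda>j. literal (even (card {i\<in>X. i < j})) (phi_at (p j) c)) (sorted_list_of_set X)))"

lemma sat_alternation_fm:
  assumes "finite X" and below: "\<And>j. j \<in> X \<Longrightarrow> p j + n \<le> c"
  shows "sat M e (alternation_fm p c X) \<longleftrightarrow> alternating (\<lambda>j. block e (p j) n) X"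
proof -
  let ?agree = "\<lambda>e'. \<forall>v. v \<notin> set [c..<c + k] \<longrightarrow> e' v = e v"
  have pattern: "(\<forall>\<psi>\<in>set (map (\<lambda>j. literal (even (card {i\<in>X. i < j})) (phi_at (p j) c))
      (sorted_list_of_set X)). sat M e' \<psi>) \<longleftrightarrow>
      alternates (\<lambda>j. holds M \<phi> (block e (p j) n) (block e' c k)) X"
    if "?agree e'" for e'
  proof -
    have "sat M e' (phi_at (p j) c) \<longleftrightarrow> holds M \<phi> (block e (p j) n) (block e' c k)" if "j \<in> X" for j
    proof -
      have "block e' (p j) n = block e (p j) n"
        using below[OF that] \<open>?agree e'\<close> by (intro block_cong) auto
      then show ?thesis
        using below[OF that] by (simp add: sat_phi_at)
    qed
    then show ?thesis
      using assms(1) by (auto simp: sat_literal alternates_def)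
  qed
  have "sat M e (alternation_fm p c X) \<longleftrightarrow>
      (\<exists>e'. ?agree e' \<and> alternates (\<lambda>j. holds M \<phi> (block e (p j) n) (block e' c k)) X)"
    unfolding alternation_fm_def sat_Exs sat_Conjs using pattern by blast
  also have "\<dots> \<longleftrightarrow> alternating (\<lambda>j. block e (p j) n) X"
  proof
    assume "\<exists>e'. ?agree e' \<and> alternates (\<lambda>j. holds M \<phi> (block e (p j) n) (block e' c k)) X"
    then show "alternating (\<lambda>j. block e (p j) n) X"
      unfolding alternating_def by (metis length_block)
  next
    assume "alternating (\<lambda>j. block e (p j) n) X"
    then obtain b where b: "length b = k" "alternates (\<lambda>j. holds M \<phi> (block e (p j) n) b) X"
      unfolding alternating_def by blast
    define e' where "e' v = (if c \<le> v \<and> v < c + k then b ! (v - c) else e v)" for v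
    have "block e' c k = b"
      using b(1) by (auto simp: block_def e'_def intro: nth_equalityI)
    moreover have "?agree e'"
      by (auto simp: e'_def)
    ultimately show "\<exists>e'. ?agree e' \<and> alternates (\<lambda>j. holds M \<phi> (block e (p j) n) (block e' c k)) X"
      using b(2) by metis
  qed
  finally show ?thesis .
qed

lemma fv_alternation_fm:
  assumes "finite X" and below: "\<And>j. j \<in> X \<Longrightarrow> p j + n \<le> c"
  shows "fv (alternation_fm p c X) \<subseteq> (\<Union>j\<in>X. {p j..<p j + n})"
proof -
  have "fv (alternation_fm p c X) = (\<Union>j\<in>X. fv (phi_at (p j) c)) - {c..<c + k}"
    using assms(1) by (auto simp: alternation_fm_def fv_Exs fv_Conjs fv_literal)
  also have "\<dots> \<subseteq> (\<Union>j\<in>X. {p j..<p j + n})"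
    using fv_phi_at below by fastforce
  finally show ?thesis .
qed

text \<open>slot l t is where a t starts in extension_fm l m: the new tuple a l occupies block 0, so that
  it provides the free variables, the parameters a 0, ..., a (l-1) blocks 1 to l, and the
  quantified a (l+1), ..., a (l+m) blocks l+1 to l+m; the witnesses b follow them.\<close>

definition slot :: "nat \<Rightarrow> nat \<Rightarrow> nat" where
  "slot l t = (if t < l then t + 1 else if t = l then 0 else t) * n"

lemma slot_bound: "l < L \<Longrightarrow> t < L \<Longrightarrow> slot l t + n \<le> L * n"
proof -
  assume "l < L" "t < L"
  then have "(if t < l then t + 1 else if t = l then 0 else t) + 1 \<le> L"
    by auto
  then have "((if t < l then t + 1 else if t = l then 0 else t) + 1) * n \<le> L * n"
    by (rule mult_le_mono1)
  then show ?thesis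
    by (simp add: slot_def algebra_simps)
qed

lemma block_env_slot:
  assumes "length x = n" "\<forall>i<l. length (a i) = n" "t \<le> l"
  shows "block (env (x @ concat (map a [0..<l]))) (slot l t) n = (if t < l then a t else x)"
proof (cases "t < l")
  case True
  have "env (x @ concat (map a [0..<l])) (slot l t + w) = a t ! w" if "w < n" for w
  proof -
    have "t * n + w < (t + 1) * n"
      using that by simp
    also have "\<dots> \<le> l * n"
      using True by (intro mult_le_mono1) simp
    finally have "t * n + w < l * n" .
    moreover have "slot l t + w = n + (t * n + w)"
      using True by (simp add: slot_def)
    ultimately show ?thesis
      using assms True that
      by (simp add: env_def nth_append length_concat_uniform[OF assms(2)] nth_concat_uniform)
  qed
  then show ?thesis
    using assms(2) True by (auto simp: block_def intro: nth_equalityI)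
next
  case False
  then show ?thesis
    using assms(1,3) by (auto simp: block_def slot_def env_def nth_append intro: nth_equalityI)
qed

lemma ex_env_blocks_iff:
  assumes "l < L" and P: "\<And>a a'. (\<And>t. t < L \<Longrightarrow> a t = a' t) \<Longrightarrow> P a \<Longrightarrow> P a'"
  shows "(\<exists>e'. (\<forall>v. v \<notin> set [(l+1)*n..<L*n] \<longrightarrow> e' v = e v) \<and> P (\<lambda>t. block e' (slot l t) n)) \<longleftrightarrow>
    (\<exists>a'. (\<forall>t\<le>l. a' t = block e (slot l t) n) \<and> (\<forall>t<L. length (a' t) = n) \<and> P a')"
    (is "(\<exists>e'. ?agree e' \<and> _) \<longleftrightarrow> _")
proof -
  have low: "block e' (slot l t) n = block e (slot l t) n" if "t \<le> l" "?agree e'" for t e'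
  proof (rule block_cong)
    fix w assume "w < n"
    moreover have "slot l t + n \<le> (l+1) * n"
      using slot_bound[of l "l+1" t] that(1) by simp
    ultimately show "e' (slot l t + w) = e (slot l t + w)"
      using that(2) by simp
  qed
  show ?thesis
  proof
    assume "\<exists>e'. ?agree e' \<and> P (\<lambda>t. block e' (slot l t) n)"
    then obtain e' where agree: "?agree e'" and "P (\<lambda>t. block e' (slot l t) n)"
      by blast
    then show "\<exists>a'. (\<forall>t\<le>l. a' t = block e (slot l t) n) \<and> (\<forall>t<L. length (a' t) = n) \<and> P a'"
      using low[OF _ agree] by (intro exI[of _ "\<lambda>t. block e' (slot l t) n"]) simp
  next
    assume "\<exists>a'. (\<forall>t\<le>l. a' t = block e (slot l t) n) \<and> (\<forall>t<L. length (a' t) = n) \<and> P a'"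
    then obtain a' where a': "\<forall>t\<le>l. a' t = block e (slot l t) n" "\<forall>t<L. length (a' t) = n" "P a'"
      by blast
    define e' where "e' v = (if (l+1)*n \<le> v \<and> v < L*n then a' (v div n) ! (v mod n) else e v)" for v
    have agree: "?agree e'"
      by (auto simp: e'_def)
    have "block e' (slot l t) n = a' t" if "t < L" for t
    proof (cases "t \<le> l")
      case True
      then show ?thesis
        using low[OF True agree] a'(1) by simp
    next
      case False
      have "e' (t * n + w) = a' t ! w" if "w < n" for w
      proof -
        have "(l+1) * n \<le> t * n"
          using False by (intro mult_le_mono1) simp
        moreover have "t * n + w < L * n"
          using slot_bound[of l L t] \<open>t < L\<close> False that by (simp add: slot_def)
        ultimately show ?thesis
          using that by (simp add: e'_def)
      qed
      then show ?thesis
        using False a'(2) \<open>t < L\<close> by (auto simp: block_def slot_def intro: nth_equalityI)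
    qed
    then have "P (\<lambda>t. block e' (slot l t) n)"
      using P[OF _ a'(3)] by metis
    then show "\<exists>e'. ?agree e' \<and> P (\<lambda>t. block e' (slot l t) n)"
      using agree by blast
  qed
qed

definition extension_fm :: "nat \<Rightarrow> nat \<Rightarrow> ('f, 'r) fm" where
  "extension_fm l m = Exs [(l+1)*n..<(l+1+m)*n]
     (Conjs (map (alternation_fm (slot l) ((l+1+m)*n) \<circ> set) (subseqs [0..<l+1+m])))"

lemma holds_extension_fm:
  assumes "length x = n" "\<forall>i<l. length (a i) = n"
  shows "holds M (extension_fm l m) x (concat (map a [0..<l])) \<longleftrightarrow>
    (\<exists>a'. (\<forall>i<l. a' i = a i) \<and> a' l = x \<and> (\<forall>i<l+1+m. length (a' i) = n) \<and>
      alternating_upto a' (l+1+m))"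
proof -
  define L where "L = l + 1 + m"
  define e where "e = env (x @ concat (map a [0..<l]))"
  have "l < L"
    by (simp add: L_def)
  have "(\<forall>\<psi>\<in>set (map (alternation_fm (slot l) (L*n) \<circ> set) (subseqs [0..<L])). sat M e' \<psi>) \<longleftrightarrow>
      alternating_upto (\<lambda>t. block e' (slot l t) n) L" for e'
  proof -
    have sat_X: "sat M e' (alternation_fm (slot l) (L*n) X) \<longleftrightarrow>
        alternating (\<lambda>t. block e' (slot l t) n) X"
      if "X \<subseteq> {..<L}" for X
      using that slot_bound[OF \<open>l < L\<close>] by (intro sat_alternation_fm) (auto intro: finite_subset)
    show ?thesis
      unfolding set_map_subseqs_upt alternating_upto_def by (simp add: sat_X Pow_def)
  qed
  then have "sat M e (extension_fm l m) \<longleftrightarrow> (\<exists>e'. (\<forall>v. v \<notin> set [(l+1)*n..<L*n] \<longrightarrow> e' v = e v) \<and>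
      alternating_upto (\<lambda>t. block e' (slot l t) n) L)"
    unfolding extension_fm_def L_def[symmetric] sat_Exs sat_Conjs by blast
  also have "\<dots> \<longleftrightarrow> (\<exists>a'. (\<forall>t\<le>l. a' t = block e (slot l t) n) \<and> (\<forall>t<L. length (a' t) = n) \<and>
      alternating_upto a' L)"
    using ex_env_blocks_iff[where P = "\<lambda>a. alternating_upto a L", OF \<open>l < L\<close>] alternating_upto_cong
    by blast
  also have "\<dots> \<longleftrightarrow> (\<exists>a'. ((\<forall>i<l. a' i = a i) \<and> a' l = x) \<and> (\<forall>t<L. length (a' t) = n) \<and>
      alternating_upto a' L)"
  proof -
    have "(\<forall>t\<le>l. a' t = block e (slot l t) n) \<longleftrightarrow> (\<forall>i<l. a' i = a i) \<and> a' l = x" for a'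
      using block_env_slot[OF assms] by (auto simp: e_def le_less)
    then show ?thesis
      by (simp only:)
  qed
  finally show ?thesis
    by (simp add: holds_def e_def L_def conj_assoc)
qed

lemma fv_extension_fm: "fv (extension_fm l m) \<subseteq> {..<(l+1)*n}"
proof
  fix v assume v: "v \<in> fv (extension_fm l m)"
  define L where "L = l + 1 + m"
  have "l < L"
    by (simp add: L_def)
  have "fv (extension_fm l m) =
      (\<Union>X\<in>Pow {..<L}. fv (alternation_fm (slot l) (L*n) X)) - {(l+1)*n..<L*n}"
    unfolding extension_fm_def L_def[symmetric] fv_Exs fv_Conjs set_map_subseqs_upt
    by (simp add: image_image)
  with v obtain X where X: "X \<subseteq> {..<L}" and v_X: "v \<in> fv (alternation_fm (slot l) (L*n) X)"
    and not_ext: "v \<notin> {(l+1)*n..<L*n}"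
    by blast
  have "finite X"
    using finite_subset[OF X] by simp
  then have "fv (alternation_fm (slot l) (L*n) X) \<subseteq> (\<Union>t\<in>X. {slot l t..<slot l t + n})"
    by (rule fv_alternation_fm) (meson X lessThan_iff slot_bound[OF \<open>l < L\<close>] subsetD)
  with v_X obtain t where "t \<in> X" "v \<in> {slot l t..<slot l t + n}"
    by blast
  then have t: "t < L" "slot l t \<le> v" "v < slot l t + n"
    using X by auto
  show "v \<in> {..<(l+1)*n}"
  proof (cases "t \<le> l")
    case True
    then show ?thesis
      using slot_bound[of l "l+1" t] t by simp
  next
    case False
    then have "(l+1) * n \<le> t * n"
      by (intro mult_le_mono1) simp
    then have "(l+1) * n \<le> slot l t"
      using False by (simp add: slot_def)
    then show ?thesis
      using t slot_bound[OF \<open>l < L\<close> \<open>t < L\<close>] not_ext by auto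
  qed
qed

definition extendable :: "nat \<Rightarrow> (nat \<Rightarrow> 'm list) \<Rightarrow> bool" where
  "extendable l a \<longleftrightarrow>
     (\<forall>m. \<exists>a'. (\<forall>i<l. a' i = a i) \<and> (\<forall>i<l+m. length (a' i) = n) \<and> alternating_upto a' (l+m))"

lemma extendable_Suc:
  assumes "aleph1_saturated M" and ext: "extendable l a"
  shows "\<exists>x. length x = n \<and> extendable (Suc l) (a(l := x))"
proof -
  have a: "\<forall>i<l. length (a i) = n"
    using ext[unfolded extendable_def, rule_format, of 0] by auto
  have "\<exists>x. length x = n \<and> (\<forall>m<N. holds M (extension_fm l m) x (concat (map a [0..<l])))" for N
  proof -
    obtain a' where a': "\<forall>i<l. a' i = a i" "\<forall>i<l+(N+1). length (a' i) = n"
      "alternating_upto a' (l+(N+1))"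
      using ext unfolding extendable_def by blast
    have "length (a' l) = n"
      using a'(2) by simp
    have "holds M (extension_fm l m) (a' l) (concat (map a [0..<l]))" if "m < N" for m
      unfolding holds_extension_fm[OF \<open>length (a' l) = n\<close> a]
      using a' that alternating_upto_mono[OF a'(3)] by (intro exI[of _ a']) auto
    then show ?thesis
      using a'(2) by (intro exI[of _ "a' l"]) auto
  qed
  moreover have "fv (extension_fm l m) \<subseteq> {..<n + length (concat (map a [0..<l]))}" for m
    using fv_extension_fm[of l m] by (simp add: length_concat_uniform[OF a])
  ultimately obtain x
    where x: "length x = n" "\<forall>m. holds M (extension_fm l m) x (concat (map a [0..<l]))"
    using aleph1_saturated_realizes[OF assms(1),
        where \<psi> = "extension_fm l" and c = "\<lambda>_. concat (map a [0..<l])"]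
    by blast
  have "extendable (Suc l) (a(l := x))"
    unfolding extendable_def
  proof
    fix m
    obtain a' where "\<forall>i<l. a' i = a i" "a' l = x" "\<forall>i<l+1+m. length (a' i) = n"
      "alternating_upto a' (l+1+m)"
      using x(2) holds_extension_fm[OF x(1) a] by blast
    then show "\<exists>a'. (\<forall>i<Suc l. a' i = (a(l := x)) i) \<and> (\<forall>i<Suc l+m. length (a' i) = n) \<and>
        alternating_upto a' (Suc l+m)"
      by (intro exI[of _ a']) (auto simp: less_Suc_eq)
  qed
  then show ?thesis
    using x(1) by blast
qed

text \<open>The sequence is built one element at a time: the next element realizes the type
  consisting of the formulas extension_fm l m over the previous ones.\<close>

lemma ex_alternating_sequence:
  assumes "aleph1_saturated M" and long: "\<And>L. \<exists>a. (\<forall>i<L. length (a i) = n) \<and> alternating_upto a L"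
  shows "\<exists>s. (\<forall>i. length (s i) = n) \<and> (\<forall>L. alternating_upto s L)"
proof -
  have "extendable 0 a" for a
    using long by (simp add: extendable_def)
  then obtain f where f: "\<And>l. extendable l (f l)" "\<And>l i. i < l \<Longrightarrow> f (Suc l) i = f l i"
    using dependent_nat_choice[where P = extendable and Q = "\<lambda>l a a'. \<forall>i<l. a' i = a i"]
      extendable_Suc[OF assms(1)] by (metis fun_upd_other less_irrefl_nat)
  define s where "s i = f (Suc i) i" for i
  have s: "f l i = s i" if "i < l" for l i
    using that by (induction l) (auto simp: less_Suc_eq s_def f(2))
  have "\<exists>a'. (\<forall>i<l. a' i = s i) \<and> (\<forall>i<l. length (a' i) = n) \<and> alternating_upto a' l" for l
    using f(1)[of l, unfolded extendable_def, rule_format, of 0] s by auto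
  then have "(\<forall>i<l. length (s i) = n) \<and> alternating_upto s l" for l
    using alternating_upto_cong by metis
  then show ?thesis
    by (metis lessI)
qed

lemma shatters_odd_positions:
  assumes "aleph1_saturated M" and alt: "\<And>L. alternating_upto s L" and len: "\<And>i. length (s i) = n"
  shows "\<exists>b. length b = k \<and> (\<forall>i. holds M \<phi> (s (2*i+1)) b \<longleftrightarrow> i \<in> S)"
proof -
  let ?\<psi> = "\<lambda>i. literal (i \<in> S) (phi_at k 0)"
  have "fv (?\<psi> i) \<subseteq> {..<k + length (s (2*i+1))}" for i
    using fv_phi_at[of k 0] len by (auto simp: fv_literal)
  moreover have "\<exists>b. length b = k \<and> (\<forall>i<N. holds M (?\<psi> i) b (s (2*i+1)))" for N
  proof -
    obtain X where X: "X \<subseteq> {..<2*N}" "\<forall>i<N. 2*i+1 \<in> X \<and> (even (card {j\<in>X. j < 2*i+1}) \<longleftrightarrow> i \<in> S)"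
      using odd_positions_pattern by blast
    then obtain b where b: "length b = k" "alternates (\<lambda>j. holds M \<phi> (s j) b) X"
      using alt[of "2*N"] by (auto simp: alternating_upto_def alternating_def)
    have "holds M (?\<psi> i) b (s (2*i+1))" if "i < N" for i
      using X(2) b(2) that
      by (simp add: holds_literal holds_phi_at_swap[OF b(1) len] alternates_def)
    then show ?thesis
      using b(1) by blast
  qed
  ultimately obtain b where b: "length b = k" "\<forall>i. holds M (?\<psi> i) b (s (2*i+1))"
    using aleph1_saturated_realizes[OF assms(1), where \<psi> = ?\<psi> and c = "\<lambda>i. s (2*i+1)"] by blast
  then show ?thesis
    using holds_phi_at_swap[OF b(1) len] by (auto simp: holds_literal)
qed

lemma alternating_upto_subsequence:
  assumes "\<And>I. infinite I \<Longrightarrow> \<exists>X\<subseteq>I. finite X \<and> card X = L \<and> alternating a X"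
  shows "\<exists>e. strict_mono e \<and> alternating_upto (a \<circ> e) L"
proof -
  obtain Y where "Y \<subseteq> UNIV" "infinite Y" and hom:
    "(\<forall>X. X \<subseteq> Y \<and> finite X \<and> card X = L \<longrightarrow> alternating a X) \<or>
     (\<forall>X. X \<subseteq> Y \<and> finite X \<and> card X = L \<longrightarrow> \<not> alternating a X)"
    by (rule Ramsey_dichotomy[OF infinite_UNIV_nat])
  have Y: "infinite Y" "\<And>X. X \<subseteq> Y \<Longrightarrow> finite X \<Longrightarrow> card X = L \<Longrightarrow> alternating a X"
    using hom assms[OF \<open>infinite Y\<close>] \<open>infinite Y\<close> by blast+
  define e where "e = enumerate Y"
  have e: "strict_mono e" "range e \<subseteq> Y"
    using strict_mono_enumerate[OF Y(1)] range_enumerate[OF Y(1)] by (auto simp: e_def)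
  have "alternating (a \<circ> e) X" if X: "X \<subseteq> {..<L}" for X
  proof -
    define Z where "Z = {L..<L + (L - card X)}"
    have "finite X" "card X \<le> L"
      using X finite_subset card_mono[OF _ X] by auto
    moreover have "X \<inter> Z = {}"
      using X by (auto simp: Z_def)
    ultimately have "card (X \<union> Z) = L"
      by (simp add: card_Un_disjoint Z_def)
    then have "card (e ` (X \<union> Z)) = L"
      using strict_mono_imp_inj_on[OF e(1)] by (simp add: card_image inj_on_subset)
    then have "alternating a (e ` (X \<union> Z))"
      using e(2) \<open>finite X\<close> by (intro Y(2)) (auto simp: Z_def)
    then have "alternating (a \<circ> e) (X \<union> Z)"
      by (simp add: alternating_comp_strict_mono[OF e(1)])
    then show ?thesis
      by (rule alternating_initial_segment) (use X in \<open>auto simp: Z_def\<close>)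
  qed
  then show ?thesis
    using e(1) by (auto simp: alternating_upto_def)
qed

lemma NIP_bounded_alternation:
  assumes "aleph1_saturated M" "NIP M" and len: "\<And>i. length (a i) = n"
  obtains L I where "0 < L" "infinite I" "\<And>X. X \<subseteq> I \<Longrightarrow> finite X \<Longrightarrow> card X = L \<Longrightarrow> \<not> alternating a X"
proof -
  have "\<exists>L I. infinite I \<and> (\<forall>X\<subseteq>I. finite X \<longrightarrow> card X = L \<longrightarrow> \<not> alternating a X)"
  proof (rule ccontr)
    assume "\<nexists>L I. infinite I \<and> (\<forall>X\<subseteq>I. finite X \<longrightarrow> card X = L \<longrightarrow> \<not> alternating a X)"
    then have everywhere: "\<exists>X\<subseteq>I. finite X \<and> card X = L \<and> alternating a X" if "infinite I" for L I
      using that by blast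
    have "\<exists>a'. (\<forall>i<L. length (a' i) = n) \<and> alternating_upto a' L" for L
    proof -
      obtain e where "alternating_upto (a \<circ> e) L"
        using alternating_upto_subsequence[of L a] everywhere by blast
      then show ?thesis
        using len by (intro exI[of _ "a \<circ> e"]) simp
    qed
    then obtain s where s: "\<forall>i. length (s i) = n" "\<forall>L. alternating_upto s L"
      using ex_alternating_sequence[OF assms(1)] by blast
    define s' where "s' i = s (2*i+1)" for i
    have "\<forall>S. \<exists>b. length b = k \<and> (\<forall>i. holds M \<phi> (s' i) b \<longleftrightarrow> i \<in> S)"
      unfolding s'_def using shatters_odd_positions[OF assms(1)] s by blast
    moreover have "\<forall>i. length (s' i) = n"
      using s(1) by (simp add: s'_def)
    ultimately have "\<exists>a :: nat \<Rightarrow> 'm list. (\<forall>i. length (a i) = n) \<and>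
        (\<forall>S. \<exists>b. length b = k \<and> (\<forall>i. holds M \<phi> (a i) b \<longleftrightarrow> i \<in> S))"
      by (intro exI[of _ s'] conjI)
    then show False
      using assms(2) pformula unfolding NIP_def by blast
  qed
  then obtain L I where "infinite I" and no_alt: "\<forall>X\<subseteq>I. finite X \<longrightarrow> card X = L \<longrightarrow> \<not> alternating a X"
    by blast
  moreover have "L \<noteq> 0"
    using no_alt alternating_empty by fastforce
  ultimately show thesis
    using that by blast
qed

lemma type_space_bounded_alternation:
  assumes "infinite I" and no_alt: "\<And>X. X \<subseteq> I \<Longrightarrow> finite X \<Longrightarrow> card X = L \<Longrightarrow> \<not> alternating a X"
    and q: "q \<in> type_space M \<phi> k (a \<circ> enumerate I)" and X: "finite X" "card X = L"
  shows "\<not> alternates q X"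
proof
  assume alt: "alternates q X"
  let ?e = "enumerate I"
  obtain N where "\<forall>j\<in>X. j < N"
    using X(1) finite_nat_bounded by (meson lessThan_iff subsetD)
  moreover obtain b where "length b = k" "\<forall>i<N. holds M \<phi> ((a \<circ> ?e) i) b \<longleftrightarrow> q i"
    using q unfolding type_space_def by blast
  ultimately have "alternating (a \<circ> ?e) X"
    using alt unfolding alternating_def alternates_def by (intro exI[of _ b]) auto
  then have "alternating a (?e ` X)"
    by (simp add: alternating_comp_strict_mono[OF strict_mono_enumerate[OF assms(1)]])
  moreover have "?e ` X \<subseteq> I" "card (?e ` X) = L"
    using range_enumerate[OF assms(1)] strict_mono_imp_inj_on[OF strict_mono_enumerate[OF assms(1)]]
      X
    by (auto simp: card_image inj_on_subset)
  ultimately show False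
    using no_alt X(1) by blast
qed

lemma NIP_imp_DBSC_limit_subsequence:
  fixes a :: "nat \<Rightarrow> 'm list"
  assumes "aleph1_saturated M" "NIP M" and a: "\<And>i. length (a i) = n"
  obtains e g where "strict_mono e"
    "\<forall>q\<in>type_space M \<phi> k (a \<circ> e). (\<lambda>i. if q i then 1 else 0) \<longlonglongrightarrow> g q"
    "DBSC (type_space_top M \<phi> k (a \<circ> e)) g"
proof -
  obtain L I where L: "0 < L" and I: "infinite I"
    and no_alt: "\<And>X. X \<subseteq> I \<Longrightarrow> finite X \<Longrightarrow> card X = L \<Longrightarrow> \<not> alternating a X"
    using NIP_bounded_alternation[where a = a, OF assms(1,2)] a by blast
  have "\<And>q X. q \<in> type_space M \<phi> k (a \<circ> enumerate I) \<Longrightarrow> finite X \<Longrightarrow> card X = L \<Longrightarrow> \<not> alternates q X"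
    by (rule type_space_bounded_alternation[OF I no_alt])
  then obtain g where "\<forall>q\<in>type_space M \<phi> k (a \<circ> enumerate I). (\<lambda>i. if q i then 1 else 0) \<longlonglongrightarrow> g q"
    "DBSC (type_space_top M \<phi> k (a \<circ> enumerate I)) g"
    unfolding type_space_top_def using bounded_alternation_DBSC_limit[OF L] by blast
  then show thesis
    using that strict_mono_enumerate[OF I] by blast
qed

end

lemma stable_imp_NIP:
  assumes "stable M"
  shows "NIP M"
  unfolding NIP_def
proof (intro allI impI notI)
  fix \<phi> n k
  assume "pformula \<phi> n k"
    and "\<exists>a. (\<forall>i::nat. length (a i) = n) \<and> (\<forall>S. \<exists>b. length b = k \<and> (\<forall>i. holds M \<phi> (a i) b \<longleftrightarrow> i \<in> S))"
  then obtain a where a: "\<forall>i::nat. length (a i) = n"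
    and shattered: "\<forall>S. \<exists>b. length b = k \<and> (\<forall>i. holds M \<phi> (a i) b \<longleftrightarrow> i \<in> S)"
    by blast
  have "\<forall>j. \<exists>b. length b = k \<and> (\<forall>i. holds M \<phi> (a i) b \<longleftrightarrow> i < j)"
  proof
    fix j
    show "\<exists>b. length b = k \<and> (\<forall>i. holds M \<phi> (a i) b \<longleftrightarrow> i < j)"
      using shattered[rule_format, of "{..<j}"] by simp
  qed
  then obtain b where "\<forall>j. length (b j) = k \<and> (\<forall>i. holds M \<phi> (a i) (b j) \<longleftrightarrow> i < j)"
    by metis
  then have "order_property M \<phi> n k"
    using a unfolding order_property_def by blast
  then show False
    using assms \<open>pformula \<phi> n k\<close> unfolding stable_def by blast
qed

lemma stable_imp_is_class: "stable M \<Longrightarrow> is_class \<C> M"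
  unfolding stable_def is_class_def order_property_def by blast

theorem proposition3p6:
  fixes M :: "('m, 'f, 'r) struc"
    and \<C> :: "(nat \<Rightarrow> bool) topology \<Rightarrow> ((nat \<Rightarrow> bool) \<Rightarrow> real) \<Rightarrow> bool"
  assumes monster: "aleph1_saturated M"
    and C_Baire1: "\<And>X f. \<C> X f \<Longrightarrow> compact_Polish X \<and> Baire1 X f"
    and C_DBSC: "\<And>X f. compact_Polish X \<Longrightarrow> DBSC X f \<Longrightarrow> \<C> X f"
  shows "stable M \<longleftrightarrow> NIP M \<and> is_class \<C> M"
proof
  assume "stable M"
  then show "NIP M \<and> is_class \<C> M"
    by (simp add: stable_imp_NIP stable_imp_is_class)
next
  assume "NIP M \<and> is_class \<C> M"
  then have NIP: "NIP M" and is_C: "is_class \<C> M"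
    by auto
  show "stable M"
    unfolding stable_def
  proof (intro allI impI notI)
    fix \<phi> :: "('f, 'r) fm" and n k :: nat
    assume pf: "pformula \<phi> n k" and "order_property M \<phi> n k"
    then obtain a b :: "nat \<Rightarrow> 'm list" where a: "\<forall>i. length (a i) = n" and b: "\<forall>j. length (b j) = k"
      and ab: "\<forall>i j. holds M \<phi> (a i) (b j) \<longleftrightarrow> i < j"
      unfolding order_property_def by blast
    interpret partitioned_formula M \<phi> n k
      by unfold_locales (rule pf)
    obtain e g where e: "strict_mono e"
      and g: "\<forall>q\<in>type_space M \<phi> k (a \<circ> e). (\<lambda>i. if q i then 1 else 0) \<longlonglongrightarrow> g q"
        "DBSC (type_space_top M \<phi> k (a \<circ> e)) g"
      using NIP_imp_DBSC_limit_subsequence[where a = a, OF monster NIP] a by blast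
    have "\<C> (type_space_top M \<phi> k (a \<circ> e)) g"
      by (rule C_DBSC[OF _ g(2)])
        (simp add: type_space_top_def compact_Polish_closed_subspace closedin_type_space)
    moreover have "\<forall>i. length ((a \<circ> e) i) = n"
      using a by simp
    ultimately have "\<nexists>b'. (\<forall>j. length (b' j) = k) \<and> (\<forall>i j. holds M \<phi> ((a \<circ> e) i) (b' j) \<longleftrightarrow> i < j)"
      using is_C[unfolded is_class_def, rule_format, OF pf] g(1) by blast
    moreover have "(\<forall>j. length ((b \<circ> e) j) = k) \<and> (\<forall>i j. holds M \<phi> ((a \<circ> e) i) ((b \<circ> e) j) \<longleftrightarrow> i < j)"
      using b ab e by (simp add: strict_mono_less)
    ultimately show False
      by blast
  qed
qed

end
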